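(* Let $A$ be a finite alphabet with $|A|=k$, and let $L\subseteq A^*$ be $n$-PT. Let $m=f_k(n)$. Then ${\downarrow}L$ and ${\downarrow}_<L$ are $(k+1)(m+1)$-PT.
   Context: For words $u,v$, $u\sqsubseteq v$ (subword) means $u=a_1\cdots a_\ell$ with letters $a_i$ and $v=v_0a_1v_1\cdots a_\ell v_\ell$ for some words $v_i$; $u\sqsubset v$ means $u\sqsubseteq v$ and $u\neq v$. ${\downarrow}L=\{v~|~\exists u\in L: v\sqsubseteq u\}$ and ${\downarrow}_<L=\{v~|~\exists u\in L: v\sqsubset u\}$. For $n\in\mathbb{N}$, $u\sim_n v$ iff $u$ and $v$ have exactly the same subwords of length at most $n$; $L$ is $n$-PT if it is a union of $\sim_n$-classes. The functions $f_k$ ($k\geq1$) are defined by $f_1(n)=n$ and $f_{k+1}(n)=\max_{0\leq m\leq n}\bigl(m f_k(n+1-m)+m+f_k(n-m)\bigr)$. *)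

theory Defs
  imports Main "HOL-Library.Sublist"
begin

definition simeq :: "nat \<Rightarrow> 'a list \<Rightarrow> 'a list \<Rightarrow> bool" where
  "simeq n u v \<longleftrightarrow> (\<forall>w. length w \<le> n \<longrightarrow> (subseq w u \<longleftrightarrow> subseq w v))"

definition is_PT :: "'a set \<Rightarrow> nat \<Rightarrow> 'a list set \<Rightarrow> bool" where
  "is_PT A n L \<longleftrightarrow> L \<subseteq> lists A \<and>
     (\<forall>u\<in>lists A. \<forall>v\<in>lists A. simeq n u v \<longrightarrow> (u \<in> L \<longleftrightarrow> v \<in> L))"

definition down :: "'a list set \<Rightarrow> 'a list set" where
  "down L = {v. \<exists>u\<in>L. subseq v u}"

definition down_strict :: "'a list set \<Rightarrow> 'a list set" where
  "down_strict L = {v. \<exists>u\<in>L. strict_subseq v u}"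

text \<open>f k n = f_k(n) for k \<ge> 1 (the value at k = 0 is an irrelevant convention).\<close>
fun f :: "nat \<Rightarrow> nat \<Rightarrow> nat" where
  "f 0 n = n"
| "f (Suc 0) n = n"
| "f (Suc (Suc k)) n =
     Max ((\<lambda>m. m * f (Suc k) (n + 1 - m) + m + f (Suc k) (n - m)) ` {0..n})"

end

theory Submission
  imports Defs
begin

text \<open>
  Every word x over an alphabet B of size k factors into arches, x = u_1 c_1 \<dots> u_r c_r t, where
  each u_i c_i is a shortest factor containing all of B and t misses a letter. The prefix ending
  with the i-th arch contains every word of length i over B, so replacing an arch u_i by any z with
  z ~_(n+1-r) u_i, or t by any word ~_(n-r) t, preserves the class of x modulo ~_n. Induction on k
  turns this into a down-closed set E with x \<in> E \<subseteq> \<down>[x]_n whose complement is generated by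
  words of length at most k (f_k(n) + 1) + 1; the recursion of f_k is exactly the length bound
  that arises when the sets for the arches and for t are concatenated. Such an E is closed under
  ~_N for N = (k+1)(m+1), and \<down>L is the union of these sets over x \<in> L. A word of \<down>L outside
  \<down>_<L is maximal in its ~_n-class, and the same factorisation bounds its length by f_k(n) < N,
  so it is ~_N-equivalent only to itself.
\<close>

section \<open>Subword equivalence and universal words\<close>

lemma simeq_refl: "simeq n u u"
  by (simp add: simeq_def)

lemma simeq_sym: "simeq n u v \<Longrightarrow> simeq n v u"
  by (auto simp: simeq_def)

lemma simeq_trans: "simeq n u v \<Longrightarrow> simeq n v w \<Longrightarrow> simeq n u w"
  by (auto simp: simeq_def)

lemma subseq_imp_set_subset: "subseq u v \<Longrightarrow> set u \<subseteq> set v"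
  by (auto elim: list_emb_set)

lemma subseq_take: "subseq (take i xs) xs"
  by (rule prefix_imp_subseq) (rule take_is_prefix)

lemma subseq_drop: "subseq (drop i xs) xs"
  by (rule suffix_imp_subseq) (rule suffix_drop)

lemma simeq_imp_eq_if_short:
  assumes "simeq N u v" and "length v < N"
  shows "u = v"
proof -
  have vu: "subseq v u"
    using assms by (simp add: simeq_def)
  have "length u \<le> length v"
  proof (rule ccontr)
    assume "\<not> length u \<le> length v"
    then have "length (take (Suc (length v)) u) = Suc (length v)" by simp
    moreover have "subseq (take (Suc (length v)) u) v"
      using assms calculation subseq_take[of "Suc (length v)" u] by (simp add: simeq_def)
    ultimately show False
      using list_emb_length by fastforce
  qed
  then show ?thesis
    using vu subseq_same_length list_emb_length by fastforce
qed

definition universal :: "'a set \<Rightarrow> nat \<Rightarrow> 'a list \<Rightarrow> bool" where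
  "universal B p w \<longleftrightarrow> (\<forall>s. set s \<subseteq> B \<longrightarrow> length s \<le> p \<longrightarrow> subseq s w)"

lemma universal_0 [simp]: "universal B 0 w"
  by (simp add: universal_def)

lemma universal_mono: "universal B p w \<Longrightarrow> q \<le> p \<Longrightarrow> universal B q w"
  by (simp add: universal_def)

lemma universal_append:
  assumes "universal B p x" and "universal B q y"
  shows "universal B (p + q) (x @ y)"
  unfolding universal_def
proof (intro allI impI)
  fix s assume s: "set s \<subseteq> B" "length s \<le> p + q"
  have "set (take p s) \<subseteq> B" "set (drop p s) \<subseteq> B"
    using s(1) set_take_subset set_drop_subset by fastforce+
  then have "subseq (take p s) x" "subseq (drop p s) y"
    using assms s(2) by (simp_all add: universal_def)
  then show "subseq s (x @ y)"
    by (metis append_take_drop_id list_emb_append_mono)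
qed

lemma universal_append_left: "universal B p w \<Longrightarrow> universal B p (x @ w)"
  by (auto simp: universal_def intro: subseq_drop_many)

lemma universal_snoc:
  assumes "B \<subseteq> insert c (set u)"
  shows "universal B 1 (u @ [c])"
  unfolding universal_def
proof (intro allI impI)
  fix s :: "'a list" assume "set s \<subseteq> B" and "length s \<le> 1"
  then consider "s = []" | a where "s = [a]" "a \<in> insert c (set u)"
    using assms by (cases s) auto
  then show "subseq s (u @ [c])"
    by cases (auto simp: subseq_singleton_left)
qed

lemma universal_imp_simeq_append:
  assumes "universal B n x" and "set x \<subseteq> B" and "set y \<subseteq> B"
  shows "simeq n (x @ y) x"
  unfolding simeq_def
proof (intro allI impI iffI)
  fix s assume "length s \<le> n" and "subseq s (x @ y)"
  moreover have "set s \<subseteq> B"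
    using subseq_imp_set_subset[OF \<open>subseq s (x @ y)\<close>] assms(2,3) by auto
  ultimately show "subseq s x"
    using assms(1) by (simp add: universal_def)
qed (rule subseq_rev_drop_many)

text \<open>The part of s embedded into a p-universal factor can always be enlarged to the first
  (resp. last) min p |s| letters of s, since every short word over B embeds into that factor.\<close>

lemma subseq_append_universal_left:
  assumes "universal B p x" and "set s \<subseteq> B" and "subseq s (x @ y)"
  obtains s1 s2 where "s = s1 @ s2" "subseq s1 x" "subseq s2 y" "min p (length s) \<le> length s1"
proof -
  obtain a b where ab: "s = a @ b" "subseq a x" "subseq b y"
    using assms(3) by (auto elim: subseq_appendE)
  define j where "j = min p (length s)"
  show thesis
  proof (cases "j \<le> length a")
    case True
    then show thesis using ab that unfolding j_def by blast
  next
    case False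
    have "set (take j s) \<subseteq> B"
      using assms(2) set_take_subset by fastforce
    then have "subseq (take j s) x"
      using assms(1) by (simp add: universal_def j_def)
    moreover have "drop j s = drop (j - length a) b"
      using False ab(1) by simp
    then have "subseq (drop j s) y"
      using ab(3) subseq_drop subseq_order.order_trans by metis
    ultimately show thesis
      using that[of "take j s" "drop j s"] unfolding j_def by simp
  qed
qed

lemma subseq_append_universal_right:
  assumes "universal B q y" and "set s \<subseteq> B" and "subseq s (x @ y)"
  obtains s1 s2 where "s = s1 @ s2" "subseq s1 x" "subseq s2 y" "min q (length s) \<le> length s2"
proof -
  obtain a b where ab: "s = a @ b" "subseq a x" "subseq b y"
    using assms(3) by (auto elim: subseq_appendE)
  define j where "j = length s - min q (length s)"
  show thesis
  proof (cases "min q (length s) \<le> length b")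
    case True
    then show thesis using ab that by blast
  next
    case False
    have "set (drop j s) \<subseteq> B"
      using assms(2) set_drop_subset by fastforce
    then have "subseq (drop j s) y"
      using assms(1) by (simp add: universal_def j_def)
    moreover have "take j s = take j a"
      using False ab(1) by (simp add: j_def)
    then have "subseq (take j s) x"
      using ab(2) subseq_take subseq_order.order_trans by metis
    ultimately show thesis
      using that[of "take j s" "drop j s"] unfolding j_def by simp
  qed
qed

lemma subseq_universal_context:
  assumes "universal B p x" and "universal B q y"
    and "set x \<subseteq> B" and "set y \<subseteq> B" and "set u \<subseteq> B"
    and "simeq m u u'" and "n \<le> p + q + m"
    and "length s \<le> n" and "subseq s (x @ u @ y)"
  shows "subseq s (x @ u' @ y)"
proof -
  have sB: "set s \<subseteq> B"
    using assms(3-5,9) subseq_imp_set_subset by fastforce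
  obtain s1 s' where s1: "s = s1 @ s'" "subseq s1 x" "subseq s' (u @ y)" "min p (length s) \<le> length s1"
    using subseq_append_universal_left[OF assms(1) sB assms(9)] by blast
  obtain s2 s3 where s2: "s' = s2 @ s3" "subseq s2 u" "subseq s3 y" "min q (length s') \<le> length s3"
    using subseq_append_universal_right[OF assms(2), of s' u] sB s1 by auto
  have "length s2 \<le> m \<or> s2 = []"
    using s1(1,4) s2(1,4) assms(7,8) by (cases "length s \<le> p"; cases "length s' \<le> q") auto
  then have "subseq s2 u'"
    using s2(2) assms(6) by (auto simp: simeq_def)
  then show ?thesis
    using s1 s2 by (simp add: list_emb_append_mono)
qed

lemma simeq_universal_context:
  assumes "universal B p x" and "universal B q y"
    and "set x \<subseteq> B" and "set y \<subseteq> B" and "set u \<subseteq> B" and "set u' \<subseteq> B"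
    and "simeq m u u'" and "n \<le> p + q + m"
  shows "simeq n (x @ u @ y) (x @ u' @ y)"
  using subseq_universal_context[OF assms(1-5,7,8)]
    subseq_universal_context[OF assms(1-4,6) simeq_sym[OF assms(7)] assms(8)]
  by (auto simp: simeq_def)

section \<open>Arch factorisations\<close>

definition arch_concat :: "('a list \<times> 'a) list \<Rightarrow> 'a list \<Rightarrow> 'a list" where
  "arch_concat bs t = concat (map (\<lambda>(u, c). u @ [c]) bs) @ t"

definition arches :: "'a set \<Rightarrow> ('a list \<times> 'a) list \<Rightarrow> bool" where
  "arches B bs \<longleftrightarrow> (\<forall>(u, c) \<in> set bs. c \<in> B \<and> set u = B - {c})"

lemma arch_concat_Nil [simp]: "arch_concat [] t = t"
  by (simp add: arch_concat_def)

lemma arch_concat_Cons [simp]: "arch_concat ((u, c) # bs) t = u @ c # arch_concat bs t"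
  by (simp add: arch_concat_def)

lemma arches_Nil [simp]: "arches B []"
  by (simp add: arches_def)

lemma arches_Cons [simp]: "arches B ((u, c) # bs) \<longleftrightarrow> c \<in> B \<and> set u = B - {c} \<and> arches B bs"
  by (simp add: arches_def)

lemma split_at_first_complete_prefix:
  assumes "B \<subseteq> set w" and "B \<noteq> {}"
  shows "\<exists>u c w'. w = u @ c # w' \<and> c \<in> B \<and> c \<notin> set u \<and> B \<subseteq> insert c (set u)"
  using assms
proof (induction w rule: rev_induct)
  case (snoc a w)
  show ?case
  proof (cases "B \<subseteq> set w")
    case True
    then show ?thesis
      using snoc by (metis append.assoc append_Cons)
  next
    case False
    then have "a \<in> B" "a \<notin> set w" "B \<subseteq> insert a (set w)"
      using snoc.prems(1) by auto
    then show ?thesis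
      by blast
  qed
qed simp

lemma exists_arch_factorization:
  assumes "set w \<subseteq> B" and "B \<noteq> {}"
  shows "\<exists>bs t. w = arch_concat bs t \<and> arches B bs \<and> set t \<subset> B"
  using assms(1)
proof (induction "length w" arbitrary: w rule: less_induct)
  case less
  show ?case
  proof (cases "B \<subseteq> set w")
    case False
    then have "w = arch_concat [] w \<and> arches B [] \<and> set w \<subset> B"
      using less.prems by auto
    then show ?thesis
      by blast
  next
    case True
    then obtain u c w' where w: "w = u @ c # w'" "c \<in> B" "c \<notin> set u" "B \<subseteq> insert c (set u)"
      using split_at_first_complete_prefix[OF True assms(2)] by blast
    have u: "set u = B - {c}" and w': "set w' \<subseteq> B"
      using w less.prems by auto
    have "length w' < length w"
      using w(1) by simp
    then obtain bs t where "w' = arch_concat bs t" "arches B bs" "set t \<subset> B"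
      using less.hyps[OF _ w'] by blast
    then have "w = arch_concat ((u, c) # bs) t \<and> arches B ((u, c) # bs) \<and> set t \<subset> B"
      using w(1,2) u by simp
    then show ?thesis
      by blast
  qed
qed

lemma universal_arch_concat: "arches B bs \<Longrightarrow> universal B (length bs) (arch_concat bs t)"
proof (induction bs)
  case (Cons b bs)
  obtain u c where "b = (u, c)" by fastforce
  with Cons have "universal B (1 + length bs) ((u @ [c]) @ arch_concat bs t)"
    by (intro universal_append universal_snoc) auto
  with \<open>b = (u, c)\<close> show ?case by simp
qed simp

lemma set_arch_concat: "arches B bs \<Longrightarrow> set t \<subseteq> B \<Longrightarrow> set (arch_concat bs t) \<subseteq> B"
  by (induction bs) (auto simp: arches_def)

definition simeq_class :: "nat \<Rightarrow> 'a list \<Rightarrow> 'a list set" where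
  "simeq_class n x = {z. set z = set x \<and> simeq n z x}"

lemma self_in_simeq_class [simp]: "x \<in> simeq_class n x"
  by (simp add: simeq_class_def simeq_refl)

definition arch_simeq :: "nat \<Rightarrow> 'a list \<times> 'a \<Rightarrow> 'a list \<times> 'a \<Rightarrow> bool" where
  "arch_simeq m = (\<lambda>(z, c') (u, c). c' = c \<and> z \<in> simeq_class m u)"

lemma arch_simeq_simp [simp]: "arch_simeq m (z, c') (u, c) \<longleftrightarrow> c' = c \<and> z \<in> simeq_class m u"
  by (simp add: arch_simeq_def)

lemma arch_simeq_refl: "list_all2 (arch_simeq m) bs bs"
  by (induction bs) auto

lemma set_arch_concat_arch_simeq:
  "list_all2 (arch_simeq m) zs bs \<Longrightarrow> set zt = set t \<Longrightarrow> set (arch_concat zs zt) = set (arch_concat bs t)"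
  by (induction rule: list_all2_induct) (auto simp: simeq_class_def)

lemma simeq_arch_replace:
  assumes "list_all2 (arch_simeq m) zs bs" and "arches B bs" and "set t \<subseteq> B"
    and "zt \<in> simeq_class m' t" and "universal B p x" and "set x \<subseteq> B"
    and "n + 1 \<le> p + length bs + m" and "n \<le> p + length bs + m'"
  shows "simeq n (x @ arch_concat bs t) (x @ arch_concat zs zt)"
  using assms
proof (induction zs bs arbitrary: x p rule: list_all2_induct)
  case Nil
  have "simeq n (x @ t @ []) (x @ zt @ [])"
    using Nil by (intro simeq_universal_context[of B p x 0]) (auto simp: simeq_class_def simeq_sym)
  then show ?case by simp
next
  case (Cons zc zs uc bs)
  obtain u c z where uc: "uc = (u, c)" and zc: "zc = (z, c)" and z: "z \<in> simeq_class m u"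
    using Cons.hyps(1) by (cases uc, cases zc) auto
  have B: "c \<in> B" "set u = B - {c}" "set z = B - {c}" "arches B bs"
    using Cons.prems(1) uc z by (auto simp: simeq_class_def)
  have rest: "universal B (length bs) ([c] @ arch_concat bs t)" "set (c # arch_concat bs t) \<subseteq> B"
    using universal_append_left[OF universal_arch_concat[OF B(4)], of "[c]"] set_arch_concat[OF B(4) Cons.prems(2)]
      B(1) by auto
  have first: "simeq n (x @ u @ c # arch_concat bs t) (x @ z @ c # arch_concat bs t)"
    using simeq_universal_context[OF Cons.prems(4) rest(1)[simplified] Cons.prems(5) rest(2), of u z m n]
      B z Cons.prems(6) by (auto simp: simeq_class_def simeq_sym)
  have "universal B (p + 1) (x @ z @ [c])"
    using universal_append[OF Cons.prems(4) universal_snoc[of B c z]] B by auto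
  moreover have "set (x @ z @ [c]) \<subseteq> B"
    using Cons.prems(5) B by auto
  ultimately have "simeq n ((x @ z @ [c]) @ arch_concat bs t) ((x @ z @ [c]) @ arch_concat zs zt)"
    by (rule Cons.IH[OF B(4) Cons.prems(2,3)]) (use Cons.prems(6,7) in simp_all)
  then show ?case
    using first uc zc simeq_trans by fastforce
qed

lemma arch_variant_in_simeq_class:
  assumes "list_all2 (arch_simeq (n + 1 - length bs)) zs bs" and "arches B bs" and "set t \<subseteq> B"
    and "zt \<in> simeq_class (n - length bs) t"
  shows "arch_concat zs zt \<in> simeq_class n (arch_concat bs t)"
  using simeq_arch_replace[OF assms, of 0 "[]" n] set_arch_concat_arch_simeq[OF assms(1)] assms(4)
  by (auto simp: simeq_class_def simeq_sym)

section \<open>Down-closed sets with short obstructions\<close>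

definition down_closed :: "'a list set \<Rightarrow> bool" where
  "down_closed X \<longleftrightarrow> (\<forall>v w. w \<in> X \<longrightarrow> subseq v w \<longrightarrow> v \<in> X)"

definition short_obstructions :: "nat \<Rightarrow> 'a list set \<Rightarrow> bool" where
  "short_obstructions h X \<longleftrightarrow> (\<forall>v. v \<notin> X \<longrightarrow> (\<exists>w. subseq w v \<and> length w \<le> h \<and> w \<notin> X))"

definition conc :: "'a list set \<Rightarrow> 'a list set \<Rightarrow> 'a list set" where
  "conc X Y = {x @ y | x y. x \<in> X \<and> y \<in> Y}"

lemma down_closedD: "down_closed X \<Longrightarrow> w \<in> X \<Longrightarrow> subseq v w \<Longrightarrow> v \<in> X"
  by (auto simp: down_closed_def)

lemma down_closed_down: "down_closed (down S)"
  unfolding down_closed_def down_def using subseq_order.order_trans by blast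

lemma subset_down: "S \<subseteq> down S"
  by (auto simp: down_def)

lemma down_mono: "S \<subseteq> T \<Longrightarrow> down S \<subseteq> down T"
  by (auto simp: down_def)

lemma down_closed_lists: "down_closed (lists B)"
  using subseq_imp_set_subset by (fastforce simp: down_closed_def)

lemma short_obstructions_lists: "short_obstructions 1 (lists B)"
  unfolding short_obstructions_def
proof (intro allI impI)
  fix v assume "v \<notin> lists B"
  then obtain a where "a \<in> set v" "a \<notin> B"
    by auto
  then show "\<exists>w. subseq w v \<and> length w \<le> 1 \<and> w \<notin> lists B"
    by (intro exI[of _ "[a]"]) (simp add: subseq_singleton_left)
qed

lemma short_obstructions_down_singleton: "short_obstructions (length x + 1) (down {x})"
  unfolding short_obstructions_def down_def
proof (intro allI impI)
  fix v assume v: "v \<notin> {v. \<exists>u\<in>{x}. subseq v u}"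
  show "\<exists>w. subseq w v \<and> length w \<le> length x + 1 \<and> w \<notin> {v. \<exists>u\<in>{x}. subseq v u}"
  proof (cases "length v \<le> length x + 1")
    case True
    then show ?thesis using v by blast
  next
    case False
    then have "\<not> subseq (take (length x + 1) v) x"
      by (intro not_subseq_length) simp
    then show ?thesis
      using subseq_take by (intro exI[of _ "take (length x + 1) v"]) auto
  qed
qed

lemma short_obstructions_mono: "short_obstructions h X \<Longrightarrow> h \<le> h' \<Longrightarrow> short_obstructions h' X"
  unfolding short_obstructions_def by (meson order.trans)

lemma down_closed_short_obstructions_simeq:
  assumes "down_closed E" and "short_obstructions h E" and "h \<le> N"
    and "simeq N u v" and "u \<in> E"
  shows "v \<in> E"
proof (rule ccontr)
  assume "v \<notin> E"
  then obtain w where w: "subseq w v" "length w \<le> h" "w \<notin> E"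
    using assms(2) by (auto simp: short_obstructions_def)
  then have "subseq w u"
    using assms(3,4) by (simp add: simeq_def)
  then show False
    using down_closedD[OF assms(1,5)] w(3) by blast
qed

lemma down_closed_conc: "down_closed X \<Longrightarrow> down_closed Y \<Longrightarrow> down_closed (conc X Y)"
  unfolding down_closed_def conc_def by (blast elim: subseq_appendE)

lemma conc_mono: "X \<subseteq> X' \<Longrightarrow> Y \<subseteq> Y' \<Longrightarrow> conc X Y \<subseteq> conc X' Y'"
  by (auto simp: conc_def)

lemma conc_down_subset: "conc (down S) (down T) \<subseteq> down (conc S T)"
  unfolding conc_def down_def by (blast intro: list_emb_append_mono)

lemma longest_prefix_in:
  "g \<in> X \<Longrightarrow> \<exists>g' r. g @ v = g' @ r \<and> g' \<in> X \<and> (\<forall>c r'. r = c # r' \<longrightarrow> g' @ [c] \<notin> X)"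
proof (induction v arbitrary: g)
  case Nil
  then show ?case by blast
next
  case (Cons c v)
  show ?case
  proof (cases "g @ [c] \<in> X")
    case True
    then show ?thesis
      using Cons.IH[of "g @ [c]"] by auto
  next
    case False
    then show ?thesis
      using Cons.prems by blast
  qed
qed

lemma subseq_snoc_not_subseq:
  assumes "subseq w (g @ [c])" and "\<not> subseq w g"
  obtains w' where "w = w' @ [c]" and "subseq w' g"
proof -
  obtain a b where ab: "w = a @ b" "subseq a g" "subseq b [c]"
    using assms(1) by (auto elim: subseq_appendE)
  with assms(2) have "b = [c]"
    by (cases b) (auto split: if_splits)
  with ab that show thesis by blast
qed

lemma subseq_Cons_shorten:
  assumes "subseq w (c # r)"
  obtains T where "subseq w (c # T)" and "subseq T r" and "length T \<le> length w"
proof (cases "subseq w r")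
  case True
  then show thesis
    using that[of w] by auto
next
  case False
  then obtain T where "w = c # T" "subseq T r"
    using assms by (cases w) (auto split: if_splits)
  then show thesis
    using that[of T] by auto
qed

lemma conc_obstruction:
  assumes "down_closed X" and "down_closed Y"
    and "w1 @ [c] \<notin> X" and "w2 \<notin> Y" and "subseq w2 (c # T)"
  shows "w1 @ c # T \<notin> conc X Y"
proof
  assume "w1 @ c # T \<in> conc X Y"
  then obtain a b where ab: "w1 @ c # T = a @ b" "a \<in> X" "b \<in> Y"
    by (auto simp: conc_def)
  show False
  proof (cases "length w1 < length a")
    case True
    then have "take (Suc (length w1)) a = w1 @ [c]"
      using arg_cong[OF ab(1), of "take (Suc (length w1))"] by simp
    then show False
      using assms(1,3) ab(2) down_closedD subseq_take by metis
  next
    case False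
    then have "b = drop (length a) w1 @ c # T"
      using arg_cong[OF ab(1), of "drop (length a)"] by simp
    then have "subseq w2 b"
      using assms(5) by (simp add: subseq_drop_many)
    then show False
      using assms(2,4) ab(3) down_closedD by blast
  qed
qed

lemma short_obstruction_conc_at_maximal_prefix:
  assumes X: "down_closed X" "short_obstructions h1 X"
    and Y: "down_closed Y" "short_obstructions h2 Y"
    and "g \<in> X" and "g @ [c] \<notin> X" and "c # r \<notin> Y"
  shows "\<exists>w. subseq w (g @ c # r) \<and> length w \<le> h1 + h2 \<and> w \<notin> conc X Y"
proof -
  \<comment> \<open>An obstruction for g c in X must end with c; it is glued to one for c r in Y along c.\<close>
  obtain w1 where w1: "subseq w1 (g @ [c])" "length w1 \<le> h1" "w1 \<notin> X"
    using X(2) assms(6) unfolding short_obstructions_def by blast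
  then have "\<not> subseq w1 g"
    using X(1) assms(5) down_closedD by blast
  then obtain w1' where w1': "w1 = w1' @ [c]" "subseq w1' g"
    using subseq_snoc_not_subseq[OF w1(1)] by blast
  obtain w2 where w2: "subseq w2 (c # r)" "length w2 \<le> h2" "w2 \<notin> Y"
    using Y(2) assms(7) unfolding short_obstructions_def by blast
  obtain T where T: "subseq w2 (c # T)" "subseq T r" "length T \<le> length w2"
    by (rule subseq_Cons_shorten[OF w2(1)])
  have "w1' @ [c] \<notin> X"
    using w1'(1) w1(3) by simp
  then have "w1' @ c # T \<notin> conc X Y"
    by (rule conc_obstruction[OF X(1) Y(1) _ w2(3) T(1)])
  moreover have "subseq (w1' @ c # T) (g @ c # r)"
    using list_emb_append_mono[OF w1'(2) subseq_Cons2[OF T(2)]] by simp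
  moreover have "length (w1' @ c # T) \<le> h1 + h2"
    using w1(2) w1'(1) w2(2) T(3) by simp
  ultimately show ?thesis
    by blast
qed

lemma short_obstructions_conc:
  assumes X: "down_closed X" "short_obstructions h1 X"
    and Y: "down_closed Y" "short_obstructions h2 Y"
  shows "short_obstructions (h1 + h2) (conc X Y)"
  unfolding short_obstructions_def
proof (intro allI impI)
  fix v assume v: "v \<notin> conc X Y"
  show "\<exists>w. subseq w v \<and> length w \<le> h1 + h2 \<and> w \<notin> conc X Y"
  proof (cases "[] \<in> conc X Y")
    case False
    then show ?thesis
      by (intro exI[of _ "[]"]) simp
  next
    case True
    then have "[] \<in> X" "[] \<in> Y"
      unfolding conc_def by auto
    then obtain g r where gr: "v = g @ r" "g \<in> X" and maximal: "\<And>c r'. r = c # r' \<Longrightarrow> g @ [c] \<notin> X"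
      using longest_prefix_in[of "[]" X v] by (metis append_Nil)
    have "r \<notin> Y"
      using v gr unfolding conc_def by blast
    with \<open>[] \<in> Y\<close> obtain c r' where r: "r = c # r'"
      by (cases r) auto
    then show ?thesis
      using short_obstruction_conc_at_maximal_prefix[OF X Y gr(2) maximal[OF r]] \<open>r \<notin> Y\<close> gr(1) by simp
  qed
qed

section \<open>The bound f\<close>

lemma f_step_bound:
  assumes "1 \<le> k" and "m \<le> n"
  shows "m * f k (n + 1 - m) + m + f k (n - m) \<le> f (Suc k) n"
proof -
  obtain k' where "k = Suc k'"
    using assms(1) by (cases k) auto
  then show ?thesis
    using assms(2) by simp
qed

lemma f_le_f_Suc: "f k n \<le> f (Suc k) n"
  using f_step_bound[of k 0 n] by (cases k) auto

lemma f_mono: "j \<le> k \<Longrightarrow> f j n \<le> f k n"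
  using lift_Suc_mono_le[of "\<lambda>k. f k n"] f_le_f_Suc by blast

lemma le_f: "n \<le> f k n"
  using f_mono[of 0 k n] by simp

section \<open>Envelopes\<close>

definition envelopes :: "nat \<Rightarrow> 'a list set \<Rightarrow> 'a list \<Rightarrow> 'a list set set" where
  "envelopes h S x = {E. x \<in> E \<and> down_closed E \<and> E \<subseteq> down S \<and> short_obstructions h E}"

lemma envelopes_mono:
  "E \<in> envelopes h S x \<Longrightarrow> h \<le> h' \<Longrightarrow> S \<subseteq> S' \<Longrightarrow> E \<in> envelopes h' S' x"
  unfolding envelopes_def using short_obstructions_mono down_mono by blast

lemma down_singleton_envelope: "down {x} \<in> envelopes (length x + 1) {x} x"
  unfolding envelopes_def
  using down_closed_down short_obstructions_down_singleton subset_down by blast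

lemma conc_envelopes:
  assumes "E1 \<in> envelopes h1 S x" and "E2 \<in> envelopes h2 T y"
  shows "conc E1 E2 \<in> envelopes (h1 + h2) (conc S T) (x @ y)"
proof -
  have "conc E1 E2 \<subseteq> conc (down S) (down T)"
    using assms by (intro conc_mono) (auto simp: envelopes_def)
  also have "\<dots> \<subseteq> down (conc S T)"
    by (rule conc_down_subset)
  moreover have "x @ y \<in> conc E1 E2"
    using assms unfolding envelopes_def conc_def by blast
  ultimately show ?thesis
    using assms down_closed_conc short_obstructions_conc unfolding envelopes_def by blast
qed

definition arch_variants :: "nat \<Rightarrow> nat \<Rightarrow> ('a list \<times> 'a) list \<Rightarrow> 'a list \<Rightarrow> 'a list set" where
  "arch_variants m m' bs t =
     {arch_concat zs zt | zs zt. list_all2 (arch_simeq m) zs bs \<and> zt \<in> simeq_class m' t}"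

lemma arch_variants_Nil: "arch_variants m m' [] t = simeq_class m' t"
  by (auto simp: arch_variants_def)

lemma arch_variants_Cons:
  "conc (conc (simeq_class m u) {[c]}) (arch_variants m m' bs t) \<subseteq> arch_variants m m' ((u, c) # bs) t"
proof
  fix v assume "v \<in> conc (conc (simeq_class m u) {[c]}) (arch_variants m m' bs t)"
  then obtain z zs zt where "v = (z @ [c]) @ arch_concat zs zt" "z \<in> simeq_class m u"
    "list_all2 (arch_simeq m) zs bs" "zt \<in> simeq_class m' t"
    by (auto simp: conc_def arch_variants_def)
  then show "v \<in> arch_variants m m' ((u, c) # bs) t"
    unfolding arch_variants_def by (intro CollectI exI[of _ "(z, c) # zs"] exI[of _ zt]) simp
qed

lemma arch_concat_envelope:
  assumes "\<And>u c. (u, c) \<in> set bs \<Longrightarrow> \<exists>E. E \<in> envelopes h (simeq_class m u) u"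
    and "\<exists>E. E \<in> envelopes h' (simeq_class m' t) t"
  shows "\<exists>E. E \<in> envelopes (length bs * (h + 2) + h') (arch_variants m m' bs t) (arch_concat bs t)"
  using assms(1)
proof (induction bs)
  case Nil
  then show ?case
    using assms(2) by (simp add: arch_variants_Nil)
next
  case (Cons b bs)
  obtain u c where b: "b = (u, c)" by fastforce
  obtain Eu where "Eu \<in> envelopes h (simeq_class m u) u"
    using Cons.prems b by auto
  then have "conc Eu (down {[c]}) \<in> envelopes (h + 2) (conc (simeq_class m u) {[c]}) (u @ [c])"
    using conc_envelopes down_singleton_envelope[of "[c]"] by fastforce
  moreover obtain E where "E \<in> envelopes (length bs * (h + 2) + h') (arch_variants m m' bs t) (arch_concat bs t)"
    using Cons by auto
  ultimately have "conc (conc Eu (down {[c]})) E \<in> envelopes (h + 2 + (length bs * (h + 2) + h'))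
      (conc (conc (simeq_class m u) {[c]}) (arch_variants m m' bs t)) ((u @ [c]) @ arch_concat bs t)"
    by (rule conc_envelopes)
  then show ?case
    using b envelopes_mono[OF _ _ arch_variants_Cons] by (fastforce simp: algebra_simps)
qed

lemma lists_envelope:
  assumes "universal (set x) n x"
  shows "lists (set x) \<in> envelopes 1 (simeq_class n x) x"
proof -
  have "lists (set x) \<subseteq> down (simeq_class n x)"
  proof
    fix v assume "v \<in> lists (set x)"
    then have "x @ v \<in> simeq_class n x"
      using universal_imp_simeq_append[OF assms] by (auto simp: simeq_class_def)
    then show "v \<in> down (simeq_class n x)"
      unfolding down_def by (blast intro: subseq_drop_many)
  qed
  then show ?thesis
    using down_closed_lists short_obstructions_lists by (auto simp: envelopes_def)
qed

lemma length_arch_concat_le: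
  "(\<And>u c. (u, c) \<in> set bs \<Longrightarrow> length u \<le> a) \<Longrightarrow> length (arch_concat bs t) \<le> length bs * (a + 1) + length t"
  by (induction bs) fastforce+

lemma length_arch_concat_single_letter:
  assumes "arches {c} bs" and "set t \<subset> {c}"
  shows "length (arch_concat bs t) \<le> length bs"
proof -
  have "t = []"
    using assms(2) by (cases t) auto
  moreover have "length u \<le> 0" if "(u, c') \<in> set bs" for u c'
    using assms(1) that by (auto simp: arches_def)
  ultimately show ?thesis
    using length_arch_concat_le[of bs 0 t] by simp
qed

lemma card_arch_factor:
  assumes "finite B" and "arches B bs" and "(u, c) \<in> set bs"
  shows "card (set u) = card B - 1"
  using assms by (auto simp: arches_def)

lemma arch_bound_arith:
  fixes K r a b F :: nat
  assumes "2 \<le> a" and "r * a + r + b \<le> F"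
  shows "r * (K * (a + 1) + 1 + 2) + (K * (b + 1) + 1) \<le> Suc K * (F + 1) + 1"
proof -
  have "r * 2 \<le> r * a"
    using assms(1) by simp
  then have "3 * r \<le> F + 1"
    using assms(2) by linarith
  moreover have "K * (r * a + r + b + 1) \<le> K * (F + 1)"
    using assms(2) by simp
  ultimately show ?thesis
    by (simp add: algebra_simps)
qed

lemma arch_envelope_exists:
  fixes t :: "'a list"
  assumes IH: "\<And>(y :: 'a list) m. card (set y) \<le> K \<Longrightarrow> \<exists>E. E \<in> envelopes (K * (f K m + 1) + 1) (simeq_class m y) y"
    and "1 \<le> K" and "finite B" and "card B = Suc K"
    and "arches B bs" and "set t \<subset> B" and "length bs < n"
  shows "\<exists>E. E \<in> envelopes (Suc K * (f (Suc K) n + 1) + 1) (simeq_class n (arch_concat bs t)) (arch_concat bs t)"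
proof -
  define r where "r = length bs"
  define h where "h m = K * (f K m + 1) + 1" for m
  have blocks: "\<exists>E. E \<in> envelopes (h (n + 1 - r)) (simeq_class (n + 1 - r) u) u" if "(u, c) \<in> set bs" for u c
    using IH[of u "n + 1 - r"] card_arch_factor[OF assms(3,5) that] assms(4) unfolding h_def by simp
  have "card (set t) < card B"
    by (rule psubset_card_mono[OF assms(3,6)])
  then have "\<exists>E. E \<in> envelopes (h (n - r)) (simeq_class (n - r) t) t"
    using IH[of t "n - r"] assms(4) unfolding h_def by simp
  then have "\<exists>E. E \<in> envelopes (r * (h (n + 1 - r) + 2) + h (n - r))
      (arch_variants (n + 1 - r) (n - r) bs t) (arch_concat bs t)"
    unfolding r_def by (intro arch_concat_envelope blocks[unfolded r_def])
  then obtain E where E: "E \<in> envelopes (r * (h (n + 1 - r) + 2) + h (n - r))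
      (arch_variants (n + 1 - r) (n - r) bs t) (arch_concat bs t)" ..
  have "arch_variants (n + 1 - r) (n - r) bs t \<subseteq> simeq_class n (arch_concat bs t)"
    using arch_variant_in_simeq_class[OF _ assms(5)] assms(6) unfolding r_def arch_variants_def by auto
  moreover have "r * (h (n + 1 - r) + 2) + h (n - r) \<le> Suc K * (f (Suc K) n + 1) + 1"
    unfolding h_def
  proof (rule arch_bound_arith)
    show "2 \<le> f K (n + 1 - r)"
      using le_f[of "n + 1 - r" K] assms(7) unfolding r_def by linarith
    show "r * f K (n + 1 - r) + r + f K (n - r) \<le> f (Suc K) n"
      using f_step_bound[OF assms(2)] assms(7) unfolding r_def by simp
  qed
  ultimately show ?thesis
    using envelopes_mono[OF E] by blast
qed

lemma envelope_exists_full_alphabet: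
  fixes x :: "'a list"
  assumes IH: "\<And>K (y :: 'a list) m. K < k \<Longrightarrow> card (set y) \<le> K \<Longrightarrow>
      \<exists>E. E \<in> envelopes (K * (f K m + 1) + 1) (simeq_class m y) y"
    and k: "card (set x) = k" and "x \<noteq> []"
  shows "\<exists>E. E \<in> envelopes (k * (f k n + 1) + 1) (simeq_class n x) x"
proof -
  obtain bs t where x: "x = arch_concat bs t" "arches (set x) bs" "set t \<subset> set x"
    using exists_arch_factorization[of x "set x"] assms(3) by auto
  show ?thesis
  proof (cases "n \<le> length bs")
    case True
    then have "universal (set x) n x"
      using universal_arch_concat[OF x(2)] x(1) universal_mono by metis
    from envelopes_mono[OF lists_envelope[OF this], of "k * (f k n + 1) + 1"] show ?thesis
      by auto
  next
    case short: False
    \<comment> \<open>f 1 is not an instance of the recursion for f, so unary words are treated directly.\<close>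
    show ?thesis
    proof (cases "k = 1")
      case True
      then obtain c where "set x = {c}"
        using k card_1_singletonE by blast
      then have "length x + 1 \<le> k * (f k n + 1) + 1"
        using length_arch_concat_single_letter[of c bs t] x short True by simp
      then show ?thesis
        using envelopes_mono[OF down_singleton_envelope[of x], of _ "simeq_class n x"] by auto
    next
      case False
      then obtain K where "k = Suc K" "1 \<le> K"
        using k \<open>x \<noteq> []\<close> by (cases k) auto
      then show ?thesis
        using arch_envelope_exists[OF IH[of K] _ _ _ x(2,3)] k x(1) short by simp
    qed
  qed
qed

lemma envelope_exists:
  fixes x :: "'a list"
  shows "card (set x) \<le> k \<Longrightarrow> \<exists>E. E \<in> envelopes (k * (f k n + 1) + 1) (simeq_class n x) x"
proof (induction k arbitrary: n x rule: less_induct)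
  case (less k)
  show ?case
  proof (cases "card (set x) < k")
    case True
    obtain E where "E \<in> envelopes (card (set x) * (f (card (set x)) n + 1) + 1) (simeq_class n x) x"
      using less.IH[OF True] by blast
    moreover have "card (set x) * (f (card (set x)) n + 1) + 1 \<le> k * (f k n + 1) + 1"
      using True f_mono[of "card (set x)" k n] by (intro add_mono mult_mono) auto
    ultimately show ?thesis
      using envelopes_mono by blast
  next
    case False
    then have "card (set x) = k"
      using less.prems by simp
    then show ?thesis
      using envelopes_mono[OF down_singleton_envelope[of "[]"], of "k * (f k n + 1) + 1" "simeq_class n []"]
        envelope_exists_full_alphabet[OF less.IH] by (cases "x = []") auto
  qed
qed

section \<open>Maximal words of a class\<close>

definition simeq_maximal :: "nat \<Rightarrow> 'a list \<Rightarrow> bool" where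
  "simeq_maximal n v \<longleftrightarrow> (\<forall>z \<in> simeq_class n v. subseq v z \<longrightarrow> z = v)"

lemma not_simeq_maximal_if_universal:
  assumes "v \<noteq> []" and "universal (set v) n v"
  shows "\<not> simeq_maximal n v"
proof -
  have "v @ [hd v] \<in> simeq_class n v"
    using universal_imp_simeq_append[OF assms(2), of "[hd v]"] assms(1) by (simp add: simeq_class_def insert_absorb)
  moreover have "subseq v (v @ [hd v])" and "v @ [hd v] \<noteq> v"
    by (simp_all add: subseq_rev_drop_many)
  ultimately show ?thesis
    unfolding simeq_maximal_def by blast
qed

lemma simeq_maximal_arch_factor:
  assumes "simeq_maximal n (arch_concat bs t)" and "arches B bs" and "set t \<subseteq> B"
    and "(u, c) \<in> set bs"
  shows "simeq_maximal (n + 1 - length bs) u"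
  unfolding simeq_maximal_def
proof (intro ballI impI)
  fix z assume z: "z \<in> simeq_class (n + 1 - length bs) u" and "subseq u z"
  obtain bs1 bs2 where bs: "bs = bs1 @ (u, c) # bs2"
    using split_list[OF assms(4)] by blast
  define zs where "zs = bs1 @ (z, c) # bs2"
  have "list_all2 (arch_simeq (n + 1 - length bs)) zs bs"
    using z unfolding zs_def by (subst (2) bs, intro list_all2_appendI) (auto simp: arch_simeq_refl)
  then have "arch_concat zs t \<in> simeq_class n (arch_concat bs t)"
    using arch_variant_in_simeq_class[OF _ assms(2,3) self_in_simeq_class] by blast
  moreover have "subseq (arch_concat bs t) (arch_concat zs t)"
    unfolding zs_def bs arch_concat_def using \<open>subseq u z\<close> by (simp add: subseq_append')
  ultimately have "arch_concat zs t = arch_concat bs t"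
    using assms(1) by (simp add: simeq_maximal_def)
  then show "z = u"
    unfolding zs_def bs arch_concat_def by simp
qed

lemma simeq_maximal_arch_tail:
  assumes "simeq_maximal n (arch_concat bs t)" and "arches B bs" and "set t \<subseteq> B"
  shows "simeq_maximal (n - length bs) t"
  unfolding simeq_maximal_def
proof (intro ballI impI)
  fix zt assume zt: "zt \<in> simeq_class (n - length bs) t" and "subseq t zt"
  have "arch_concat bs zt \<in> simeq_class n (arch_concat bs t)"
    using zt by (rule arch_variant_in_simeq_class[OF arch_simeq_refl assms(2,3)])
  moreover have "subseq (arch_concat bs t) (arch_concat bs zt)"
    unfolding arch_concat_def using \<open>subseq t zt\<close> by (simp add: subseq_append')
  ultimately have "arch_concat bs zt = arch_concat bs t"
    using assms(1) by (simp add: simeq_maximal_def)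
  then show "zt = t"
    unfolding arch_concat_def by simp
qed

lemma length_arch_concat_le_f:
  fixes t :: "'a list"
  assumes IH: "\<And>(y :: 'a list) m. card (set y) \<le> K \<Longrightarrow> simeq_maximal m y \<Longrightarrow> length y \<le> f K m"
    and "1 \<le> K" and "finite B" and "card B = Suc K"
    and "arches B bs" and "set t \<subset> B" and "length bs < n"
    and "simeq_maximal n (arch_concat bs t)"
  shows "length (arch_concat bs t) \<le> f (Suc K) n"
proof -
  define r where "r = length bs"
  have "length u \<le> f K (n + 1 - r)" if "(u, c) \<in> set bs" for u c
    using IH[of u] card_arch_factor[OF assms(3,5) that] assms(4) assms(6)
      simeq_maximal_arch_factor[OF assms(8,5) _ that] unfolding r_def by auto
  then have "length (arch_concat bs t) \<le> r * (f K (n + 1 - r) + 1) + length t"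
    unfolding r_def by (rule length_arch_concat_le)
  also have "length t \<le> f K (n - r)"
  proof -
    have "card (set t) < card B"
      by (rule psubset_card_mono[OF assms(3,6)])
    then show ?thesis
      using IH[of t] simeq_maximal_arch_tail[OF assms(8,5)] assms(4,6) unfolding r_def by auto
  qed
  also have "r * (f K (n + 1 - r) + 1) + f K (n - r) \<le> f (Suc K) n"
    using f_step_bound[OF assms(2), of r n] assms(7) unfolding r_def by (simp add: algebra_simps)
  finally show ?thesis
    by simp
qed

lemma length_le_f_if_simeq_maximal_full_alphabet:
  fixes v :: "'a list"
  assumes IH: "\<And>K (y :: 'a list) m. K < k \<Longrightarrow> card (set y) \<le> K \<Longrightarrow> simeq_maximal m y \<Longrightarrow> length y \<le> f K m"
    and k: "card (set v) = k" and "v \<noteq> []" and "simeq_maximal n v"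
  shows "length v \<le> f k n"
proof -
  obtain bs t where v: "v = arch_concat bs t" "arches (set v) bs" "set t \<subset> set v"
    using exists_arch_factorization[of v "set v"] assms(3) by auto
  have short: "length bs < n"
  proof (rule ccontr)
    assume "\<not> length bs < n"
    then have "universal (set v) n v"
      using universal_arch_concat[OF v(2)] v(1) universal_mono not_less by metis
    then show False
      using not_simeq_maximal_if_universal assms(3,4) by blast
  qed
  show ?thesis
  proof (cases "k = 1")
    case True
    then obtain c where "set v = {c}"
      using k card_1_singletonE by blast
    then show ?thesis
      using length_arch_concat_single_letter[of c bs t] v short True by simp
  next
    case False
    then obtain K where "k = Suc K" "1 \<le> K"
      using k \<open>v \<noteq> []\<close> by (cases k) auto
    then show ?thesis
      using length_arch_concat_le_f[OF IH[of K] _ _ _ v(2,3) short] k v(1) assms(4) by simp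
  qed
qed

lemma length_le_f_if_simeq_maximal:
  fixes v :: "'a list"
  shows "card (set v) \<le> k \<Longrightarrow> simeq_maximal n v \<Longrightarrow> length v \<le> f k n"
proof (induction k arbitrary: n v rule: less_induct)
  case (less k)
  show ?case
  proof (cases "card (set v) < k")
    case True
    then show ?thesis
      using less.IH[OF True _ less.prems(2)] f_mono[of "card (set v)" k n] by simp
  next
    case False
    then have "card (set v) = k"
      using less.prems(1) by simp
    then show ?thesis
      using length_le_f_if_simeq_maximal_full_alphabet[OF less.IH _ _ less.prems(2)]
      by (cases "v = []") auto
  qed
qed

section \<open>Piecewise testability of the downward closures\<close>

lemma is_PT_intro:
  assumes "L \<subseteq> lists A"
    and "\<And>u v. u \<in> lists A \<Longrightarrow> v \<in> lists A \<Longrightarrow> simeq n u v \<Longrightarrow> u \<in> L \<Longrightarrow> v \<in> L"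
  shows "is_PT A n L"
  unfolding is_PT_def
proof (intro conjI ballI impI)
  fix u v assume "u \<in> lists A" "v \<in> lists A" "simeq n u v"
  then show "u \<in> L \<longleftrightarrow> v \<in> L"
    using assms(2) assms(2)[of v u] simeq_sym by blast
qed (fact assms(1))

lemma is_PT_D:
  "is_PT A n L \<Longrightarrow> u \<in> lists A \<Longrightarrow> v \<in> lists A \<Longrightarrow> simeq n u v \<Longrightarrow> u \<in> L \<Longrightarrow> v \<in> L"
  unfolding is_PT_def by blast

lemma is_PT_simeq_class:
  assumes "is_PT A n L" and "x \<in> L"
  shows "simeq_class n x \<subseteq> L"
proof
  fix z assume z: "z \<in> simeq_class n x"
  have "x \<in> lists A"
    using assms unfolding is_PT_def by blast
  moreover have "z \<in> lists A"
    using calculation z by (auto simp: simeq_class_def)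
  moreover have "simeq n x z"
    using z simeq_sym by (auto simp: simeq_class_def)
  ultimately show "z \<in> L"
    using is_PT_D assms by blast
qed

lemma card_set_le_if_is_PT:
  assumes "is_PT A n L" and "finite A" and "card A \<le> k" and "x \<in> L"
  shows "card (set x) \<le> k"
proof -
  have "set x \<subseteq> A"
    using assms(1,4) unfolding is_PT_def by auto
  then have "card (set x) \<le> card A"
    by (rule card_mono[OF assms(2)])
  then show ?thesis
    using assms(3) by simp
qed

lemma down_subset_lists: "L \<subseteq> lists A \<Longrightarrow> down L \<subseteq> lists A"
  unfolding down_def by (auto dest!: subseq_imp_set_subset)

lemma down_strict_subset_down: "down_strict L \<subseteq> down L"
  unfolding down_strict_def down_def strict_subseq_def by blast

lemma is_PT_down:
  assumes "is_PT A n L" and "finite A" and "card A \<le> k" and "k * (f k n + 1) + 1 \<le> N"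
  shows "is_PT A N (down L)"
proof (rule is_PT_intro)
  have "L \<subseteq> lists A"
    using assms(1) by (simp add: is_PT_def)
  then show "down L \<subseteq> lists A"
    by (rule down_subset_lists)
next
  fix u v assume uv: "simeq N u v" and "u \<in> down L"
  then obtain x where x: "x \<in> L" "subseq u x"
    unfolding down_def by blast
  obtain E where "E \<in> envelopes (k * (f k n + 1) + 1) (simeq_class n x) x"
    using envelope_exists[OF card_set_le_if_is_PT[OF assms(1-3) x(1)]] by blast
  then have E: "x \<in> E" "down_closed E" "E \<subseteq> down (simeq_class n x)"
    "short_obstructions (k * (f k n + 1) + 1) E"
    by (simp_all add: envelopes_def)
  have "u \<in> E"
    using down_closedD[OF E(2,1) x(2)] .
  then have "v \<in> E"
    using down_closed_short_obstructions_simeq[OF E(2,4) assms(4) uv] by blast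
  then show "v \<in> down L"
    using E(3) down_mono[OF is_PT_simeq_class[OF assms(1) x(1)]] by blast
qed

lemma down_minus_down_strict:
  assumes "is_PT A n L" and "v \<in> down L" and "v \<notin> down_strict L"
  shows "v \<in> L" and "simeq_maximal n v"
proof -
  have top: "z = v" if "z \<in> L" "subseq v z" for z
  proof (rule ccontr)
    assume "z \<noteq> v"
    with that have "v \<in> down_strict L"
      unfolding down_strict_def strict_subseq_def by auto
    with assms(3) show False ..
  qed
  then show "v \<in> L"
    using assms(2) unfolding down_def by blast
  then show "simeq_maximal n v"
    using top is_PT_simeq_class[OF assms(1)] unfolding simeq_maximal_def by blast
qed

lemma is_PT_down_strict:
  assumes "is_PT A n L" and "finite A" and "card A \<le> k"
    and "k * (f k n + 1) + 1 \<le> N" and "f k n < N"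
  shows "is_PT A N (down_strict L)"
proof (rule is_PT_intro)
  have "L \<subseteq> lists A"
    using assms(1) by (simp add: is_PT_def)
  then show "down_strict L \<subseteq> lists A"
    using down_subset_lists down_strict_subset_down by blast
next
  fix u v assume uv: "u \<in> lists A" "v \<in> lists A" "simeq N u v" and u: "u \<in> down_strict L"
  show "v \<in> down_strict L"
  proof (rule ccontr)
    assume v: "v \<notin> down_strict L"
    have "u \<in> down L"
      using u down_strict_subset_down by blast
    then have "v \<in> down L"
      by (rule is_PT_D[OF is_PT_down[OF assms(1-4)] uv])
    then have "v \<in> L" and "simeq_maximal n v"
      using down_minus_down_strict[OF assms(1) _ v] by blast+
    then have "length v < N"
      using length_le_f_if_simeq_maximal[OF card_set_le_if_is_PT[OF assms(1-3)]] assms(5)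
      by (meson le_less_trans)
    then have "u = v"
      using simeq_imp_eq_if_short uv(3) by blast
    then show False
      using u v by simp
  qed
qed

theorem theorem15:
  fixes A :: "'a set" and L :: "'a list set" and k n m :: nat
  assumes "finite A" and "A \<noteq> {}" and "card A = k"
    and "is_PT A n L"
    and "m = f k n"
  shows "is_PT A ((k + 1) * (m + 1)) (down L) \<and>
         is_PT A ((k + 1) * (m + 1)) (down_strict L)"
proof -
  have k: "card A \<le> k"
    using assms(3) by simp
  have "k * (f k n + 1) + 1 \<le> (k + 1) * (m + 1)" and "f k n < (k + 1) * (m + 1)"
    using assms(5) by simp_all
  then show ?thesis
    by (intro conjI is_PT_down[OF assms(4,1) k] is_PT_down_strict[OF assms(4,1) k])
qed

end
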